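(* Let $\varphi=\frac{1+\sqrt5}{2}$ and write $[\varphi]_q=\sum_{k\geq0}\phi_kq^k$. Let $(a_n)_{n\geq0}$ be the generalized Catalan numbers, defined by $a_0=a_1=1$ and $$a_n=a_{n-1}+\sum_{k=1}^{n-2}a_ka_{n-2-k}\qquad(n\geq2).$$ These are the numbers $1,1,1,2,4,8,17,37,82,185,\ldots$; equivalently, their generating function $A(x)=\sum_n a_nx^n$ satisfies $A=1+xA+x^2A^2-x^2A$. Then $$\phi_k=(-1)^ka_{k-1}\qquad\text{for all }k\geq2,$$ and moreover $\phi_0=1$, $\phi_1=0$.
   Context: For an integer $a\geq1$ put $[a]_q=1+q+\cdots+q^{a-1}$ and $[a]_{q^{-1}}=1+q^{-1}+\cdots+q^{-(a-1)}$. Every rational number $r/s>1$ has a unique even-length regular continued fraction $r/s=[a_1,\ldots,a_{2m}]$ with $a_i\in\mathbb{Z}_{\geq1}$. Its $q$-deformation is the rational function $$\left[\tfrac{r}{s}\right]_q=[a_1]_q+\cfrac{q^{a_1}}{[a_2]_{q^{-1}}+\cfrac{q^{-a_2}}{[a_3]_q+\cfrac{q^{a_3}}{\ddots+\cfrac{q^{a_{2m-1}}}{[a_{2m}]_{q^{-1}}}}}}.$$ One also sets $[1]_q=1$. Each $[r/s]_q$ is identified with its Taylor expansion at $q=0$. For an irrational real number $x>1$ with continued fraction $x=[a_1,a_2,\ldots]$ and convergents $x_n=[a_1,\ldots,a_n]$, define $$[x]_q:=\sum_{k\geq0}\varkappa_kq^k,\qquad \varkappa_k=\lim_{n\to\infty}\bigl(\text{coefficient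 of }q^k\text{ in }[x_n]_q\bigr).$$ These limits exist and are eventually attained. Here $\varphi=[1,1,1,\ldots]$. *)

theory Defs
  imports "HOL-Analysis.Analysis" "HOL-Computational_Algebra.Formal_Laurent_Series"
begin

definition qint :: "nat \<Rightarrow> rat fls" where
  "qint a = (\<Sum>i<a. fls_X powi (int i))"

definition qint_inv :: "nat \<Rightarrow> rat fls" where
  "qint_inv a = (\<Sum>i<a. fls_X powi (- int i))"

(* q-deformed continued fraction; the flag says whether the current entry is at an
   odd position (uses q) or an even position (uses q^{-1}) *)
fun qcf :: "bool \<Rightarrow> nat list \<Rightarrow> rat fls" where
  "qcf s [] = 0"
| "qcf s [a] = (if s then qint a else qint_inv a)"
| "qcf s (a # b # rest) =
     (if s then qint a + fls_X powi (int a) / qcf False (b # rest)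
           else qint_inv a + fls_X powi (- int a) / qcf True (b # rest))"

fun cf_value :: "nat list \<Rightarrow> rat" where
  "cf_value [] = 0"
| "cf_value [a] = of_nat a"
| "cf_value (a # b # rest) = of_nat a + 1 / cf_value (b # rest)"

definition even_cf :: "rat \<Rightarrow> nat list" where
  "even_cf x = (THE xs. xs \<noteq> [] \<and> even (length xs) \<and> (\<forall>a\<in>set xs. a \<ge> 1) \<and> cf_value xs = x)"

(* [r/s]_q for rationals r/s \<ge> 1, with [1]_q = 1 *)
definition qrat :: "rat \<Rightarrow> rat fls" where
  "qrat x = (if x = 1 then 1 else qcf True (even_cf x))"

fun cf_rem :: "real \<Rightarrow> nat \<Rightarrow> real" where
  "cf_rem x 0 = x"
| "cf_rem x (Suc n) = 1 / (cf_rem x n - of_int \<lfloor>cf_rem x n\<rfloor>)"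

definition cf_term :: "real \<Rightarrow> nat \<Rightarrow> nat" where
  "cf_term x n = nat \<lfloor>cf_rem x n\<rfloor>"

(* n-th convergent x_n = [a_1,...,a_n] (n \<ge> 1) *)
definition convergent :: "real \<Rightarrow> nat \<Rightarrow> rat" where
  "convergent x n = cf_value (map (cf_term x) [0..<n])"

(* k-th coefficient \<varkappa>_k of [x]_q for irrational x > 1 *)
definition qreal_coeff :: "real \<Rightarrow> nat \<Rightarrow> real" where
  "qreal_coeff x k = lim (\<lambda>n. real_of_rat (fls_nth (qrat (convergent x (Suc n))) (int k)))"

fun gcat :: "nat \<Rightarrow> nat" where
  "gcat 0 = 1"
| "gcat (Suc 0) = 1"
| "gcat (Suc (Suc m)) = gcat (Suc m) + (\<Sum>k\<in>{1..m}. gcat k * gcat (m - k))"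

end

theory Submission
  imports Defs
begin

(* The convergents of \<phi> = [1, 1, 1, ...] are the all-ones continued fractions, and prepending
   two ones acts on their q-deformations by p \<mapsto> 1 + q / (1 + 1 / (q p)). The series
   qphi = 1 + q - q A(-q) is a fixed point of this map because A satisfies its functional
   equation, and the map raises the q-adic order of p - qphi by two. So the q-convergents agree
   with qphi on ever more coefficients, which are therefore the stable coefficients of [\<phi>]_q. *)

unbundle no vec_syntax
unbundle fps_syntax

lemma cf_value_Cons: "ys \<noteq> [] \<Longrightarrow> cf_value (a # ys) = of_nat a + 1 / cf_value ys"
  by (cases ys) auto

lemma cf_value_append_Suc: "cf_value (xs @ [Suc a]) = cf_value (xs @ [a, 1])"
  by (induction xs) (simp_all add: cf_value_Cons)

lemma cf_value_ge_1: "xs \<noteq> [] \<Longrightarrow> \<forall>x\<in>set xs. 1 \<le> x \<Longrightarrow> 1 \<le> cf_value xs"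
proof (induction xs)
  case (Cons a t)
  show ?case
  proof (cases "t = []")
    case False
    have "1 \<le> cf_value t" using Cons False by simp
    then have "0 \<le> 1 / cf_value t" by simp
    moreover have "1 \<le> (of_nat a :: rat)" using Cons.prems by simp
    ultimately show ?thesis using cf_value_Cons[OF False, of a] by linarith
  qed (use Cons.prems in simp)
qed simp

lemma cf_value_gt_1:
  assumes "xs \<noteq> []" "xs \<noteq> [1]" "\<forall>x\<in>set xs. 1 \<le> x"
  shows "1 < cf_value xs"
proof (cases xs)
  case (Cons b s)
  show ?thesis
  proof (cases "s = []")
    case False
    have "1 \<le> cf_value s" using assms Cons False cf_value_ge_1[of s] by simp
    then have "0 < 1 / cf_value s" by simp
    moreover have "1 \<le> (of_nat b :: rat)" using assms Cons by simp
    ultimately show ?thesis using cf_value_Cons[OF False, of b] unfolding Cons by linarith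
  qed (use assms Cons in auto)
qed (use assms in simp)

lemma cf_value_Cons_bounds:
  assumes "t \<noteq> []" "t \<noteq> [1]" "\<forall>x\<in>set t. 1 \<le> x"
  shows "of_nat a < cf_value (a # t)" "cf_value (a # t) < of_nat a + 1"
  using cf_value_gt_1[OF assms] assms(1) by (simp_all add: cf_value_Cons)

lemma cf_value_Cons_not_Int:
  assumes "t \<noteq> []" "t \<noteq> [1]" "\<forall>x\<in>set t. 1 \<le> x"
  shows "\<lfloor>cf_value (a # t)\<rfloor> = int a" "cf_value (a # t) \<notin> \<int>"
proof -
  note bounds = cf_value_Cons_bounds[OF assms, of a]
  then show "\<lfloor>cf_value (a # t)\<rfloor> = int a" by (simp add: floor_eq_iff)
  show "cf_value (a # t) \<notin> \<int>"
  proof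
    assume "cf_value (a # t) \<in> \<int>"
    then obtain z where "cf_value (a # t) = of_int z" by (elim Ints_cases)
    then have "of_int (int a) < (of_int z :: rat)" "(of_int z :: rat) < of_int (int a + 1)"
      using bounds by simp_all
    then have "int a < z" "z < int a + 1" by (simp_all only: of_int_less_iff)
    then show False by simp
  qed
qed

lemma cf_value_inj:
  assumes "xs \<noteq> []" "ys \<noteq> []" "\<forall>x\<in>set xs. 1 \<le> x" "\<forall>y\<in>set ys. 1 \<le> y"
    and "even (length xs) \<longleftrightarrow> even (length ys)" "cf_value xs = cf_value ys"
  shows "xs = ys"
  using assms
proof (induction xs arbitrary: ys)
  case (Cons a t)
  obtain c s where ys: "ys = c # s" using Cons.prems by (cases ys) auto
  have t: "\<forall>x\<in>set t. 1 \<le> x" and s: "\<forall>x\<in>set s. 1 \<le> x" using Cons.prems ys by auto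
  have eq: "cf_value (a # t) = cf_value (c # s)" and par: "even (length t) \<longleftrightarrow> even (length s)"
    using Cons.prems ys by auto
  have Int_iff: "cf_value (b # u) \<in> \<int> \<longleftrightarrow> u \<in> {[], [1]}" if "\<forall>x\<in>set u. 1 \<le> x" for b u
    using cf_value_Cons_not_Int[OF _ _ that, of b] by auto
  consider "t \<in> {[], [1]}" "s \<in> {[], [1]}" | "t \<notin> {[], [1]}" "s \<notin> {[], [1]}"
    using Int_iff[OF t, of a] Int_iff[OF s, of c] eq by auto
  then show ?case
  proof cases
    case 1
    then have "t = s" using par by auto
    then show ?thesis using 1 eq ys by auto
  next
    case 2
    have "a = c"
      using cf_value_Cons_not_Int(1)[OF _ _ t, of a] cf_value_Cons_not_Int(1)[OF _ _ s, of c] 2 eq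
      by simp
    then have "cf_value t = cf_value s" using eq 2 by (simp add: cf_value_Cons)
    then have "t = s" using Cons.IH[of s] 2 t s par by simp
    then show ?thesis using \<open>a = c\<close> ys by simp
  qed
qed simp

lemma even_cf_cf_value:
  assumes "xs \<noteq> []" "even (length xs)" "\<forall>x\<in>set xs. 1 \<le> x"
  shows "even_cf (cf_value xs) = xs"
  unfolding even_cf_def by (rule the_equality) (use assms cf_value_inj in auto)

lemma qint_Suc: "qint (Suc a) = qint a + fls_X powi int a"
  by (simp add: qint_def)

lemma qint_inv_Suc: "qint_inv (Suc a) = qint_inv a + fls_X powi (- int a)"
  by (simp add: qint_inv_def)

lemma qint_0 [simp]: "qint 0 = 0"
  by (simp add: qint_def)

lemma qint_inv_0 [simp]: "qint_inv 0 = 0"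
  by (simp add: qint_inv_def)

lemma qint_1 [simp]: "qint (Suc 0) = 1"
  by (simp add: qint_Suc)

lemma qint_inv_1 [simp]: "qint_inv (Suc 0) = 1"
  by (simp add: qint_inv_Suc)

lemma qcf_Cons:
  "ys \<noteq> [] \<Longrightarrow> qcf s (a # ys) =
     (if s then qint a + fls_X powi int a / qcf False ys
      else qint_inv a + fls_X powi (- int a) / qcf True ys)"
  by (cases ys) auto

lemma qcf_append_Suc: "qcf s (xs @ [Suc a]) = qcf s (xs @ [a, 1])"
  by (induction xs arbitrary: s) (simp_all add: qint_Suc qint_inv_Suc qcf_Cons)

lemma qrat_cf_value:
  assumes "xs \<noteq> []" "\<forall>x\<in>set xs. 1 \<le> x"
  shows "qrat (cf_value xs) = qcf True xs"
proof (cases "xs = [1]")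
  case True
  then show ?thesis by (simp add: qrat_def)
next
  case not_one: False
  obtain ys where ys: "ys \<noteq> []" "even (length ys)" "\<forall>y\<in>set ys. 1 \<le> y"
    and same: "cf_value ys = cf_value xs" "qcf True ys = qcf True xs"
  proof (cases "even (length xs)")
    case True
    then show ?thesis using that assms by blast
  next
    case odd: False
    obtain zs a where xs: "xs = zs @ [a]" using assms(1) rev_exhaust by blast
    show ?thesis
    proof (cases "a = 1")
      case True
      then obtain ws b where "zs = ws @ [b]" using not_one xs by (cases zs rule: rev_exhaust) auto
      then show ?thesis
        using that[of "ws @ [Suc b]"] odd assms xs True
          cf_value_append_Suc[of ws b] qcf_append_Suc[of True ws b] by auto
    next
      case False
      then obtain b where "a = Suc b" "1 \<le> b" using assms xs by (cases a) auto
      then show ?thesis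
        using that[of "zs @ [b, 1]"] odd assms xs cf_value_append_Suc qcf_append_Suc by auto
    qed
  qed
  have "cf_value xs \<noteq> 1" using cf_value_gt_1[OF assms(1) not_one assms(2)] by simp
  then show ?thesis using even_cf_cf_value[OF ys] same by (simp add: qrat_def)
qed

definition gcat_fps :: "rat fps" where
  "gcat_fps = Abs_fps (\<lambda>n. of_nat (gcat n))"

lemma gcat_fps_nth [simp]: "gcat_fps $ n = of_nat (gcat n)"
  by (simp add: gcat_fps_def)

lemma gcat_fps_equation:
  "gcat_fps = 1 + fps_X * gcat_fps + fps_X^2 * gcat_fps^2 - fps_X^2 * gcat_fps"
proof (rule fps_ext)
  fix n
  have square: "(gcat_fps^2) $ m = (\<Sum>i=0..m. of_nat (gcat i * gcat (m - i)))" for m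
    by (simp add: power2_eq_square fps_mult_nth)
  consider "n = 0" | "n = 1" | m where "n = Suc (Suc m)"
    by (metis One_nat_def not0_implies_Suc)
  then show "gcat_fps $ n
      = (1 + fps_X * gcat_fps + fps_X^2 * gcat_fps^2 - fps_X^2 * gcat_fps) $ n"
    by cases (simp_all add: fps_X_power_mult_nth square sum.atLeast_Suc_atMost)
qed

lemma gcat_fps_neg_equation:
  fixes B :: "rat fps"
  defines "B \<equiv> gcat_fps oo - fps_X"
  shows "B = 1 - fps_X * B + fps_X^2 * B^2 - fps_X^2 * B"
proof -
  have "B = (1 + fps_X * gcat_fps + fps_X^2 * gcat_fps^2 - fps_X^2 * gcat_fps) oo - fps_X"
    unfolding B_def by (subst gcat_fps_equation) (rule refl)
  then show ?thesis
    by (simp add: B_def fps_compose_add_distrib fps_compose_sub_distrib fps_compose_mult_distrib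
        fps_compose_power [symmetric])
qed

definition qphi :: "rat fls" where
  "qphi = fps_to_fls (1 + fps_X - fps_X * (gcat_fps oo - fps_X))"

lemma qphi_fixed_point: "(qphi - 1) * (fls_X * qphi + 1) = fls_X^2 * qphi"
proof -
  define B where "B = gcat_fps oo - fps_X"
  define T where "T = 1 + fps_X - fps_X * B"
  have "(T - 1) * (fps_X * T + 1) - fps_X^2 * T
      = - fps_X * (B - (1 - fps_X * B + fps_X^2 * B^2 - fps_X^2 * B))"
    by (simp add: T_def algebra_simps power2_eq_square)
  also have "\<dots> = 0" using gcat_fps_neg_equation B_def by simp
  finally have "fps_to_fls ((T - 1) * (fps_X * T + 1)) = fps_to_fls (fps_X^2 * T)" by simp
  then show ?thesis by (simp add: qphi_def T_def B_def fls_times_fps_to_fls fps_to_fls_power)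
qed

lemma qphi_nth_neg: "k < 0 \<Longrightarrow> qphi $$ k = 0"
  by (simp add: qphi_def)

lemma qphi_nth_0: "qphi $$ 0 = 1"
  by (simp add: qphi_def)

lemma qphi_nth_1: "qphi $$ 1 = 0"
  by (simp add: qphi_def fps_compose_uminus')

lemma qphi_nth_ge_2:
  assumes "2 \<le> k"
  shows "qphi $$ int k = (-1) ^ k * of_nat (gcat (k - 1))"
proof -
  obtain j where k: "k = Suc (Suc j)" using assms by (metis add_2_eq_Suc le_Suc_ex)
  have "qphi $$ int k = (1 + fps_X - fps_X * (gcat_fps oo - fps_X)) $ k"
    by (simp add: qphi_def)
  then show ?thesis by (simp add: k fps_compose_uminus')
qed

lemma fls_subdegree_X_mult_plus_1:
  fixes p :: "'a::idom fls"
  assumes "0 \<le> fls_subdegree p"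
  shows "fls_X * p + 1 \<noteq> 0" "fls_subdegree (fls_X * p + 1) = 0"
proof -
  have "(fls_X * p + 1) $$ k = (if k = 0 then 1 else 0)" if "k \<le> 0" for k
    using that assms by (simp add: fls_X_times_conv_shift)
  then show "fls_X * p + 1 \<noteq> 0" "fls_subdegree (fls_X * p + 1) = 0"
    by (auto intro!: fls_nonzeroI[of _ 0] fls_subdegree_eqI)
qed

lemma fls_vanishes_below_mult_unit:
  fixes f u :: "'a::idom fls"
  assumes "u \<noteq> 0" "fls_subdegree u = 0" and "\<forall>k<m. (f * u) $$ k = 0"
  shows "\<forall>k<m. f $$ k = 0"
proof (cases "f = 0")
  case False
  then have "m \<le> fls_subdegree (f * u)" using assms by (intro fls_subdegree_geI) auto
  then show ?thesis using False assms(1,2) by auto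
qed simp

lemma one_plus_div_step_eq:
  fixes x p :: "'a::field"
  assumes "x \<noteq> 0" "p \<noteq> 0" "x * p + 1 \<noteq> 0"
  shows "(1 + x / (1 + inverse x / p) - 1) * (x * p + 1) = x^2 * p"
proof -
  have "1 + inverse x / p = (x * p + 1) / (x * p)" using assms by (simp add: field_simps)
  then show ?thesis using assms by (simp add: field_simps power2_eq_square)
qed

lemma qcf_True_Cons_1_1:
  "xs \<noteq> [] \<Longrightarrow> qcf True (1 # 1 # xs) = 1 + fls_X / (1 + inverse fls_X / qcf True xs)"
  by (simp add: qcf_Cons power_int_minus)

lemma qphi_contraction:
  fixes p :: "rat fls"
  assumes "1 \<le> m" and agree: "\<forall>k<m. p $$ k = qphi $$ k"
  shows "\<forall>k<m + 2. (1 + fls_X / (1 + inverse fls_X / p)) $$ k = qphi $$ k"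
proof -
  define F where "F = 1 + fls_X / (1 + inverse fls_X / p)"
  define U where "U = fls_X * p + 1"
  define V where "V = fls_X * qphi + 1"
  have p_neg: "p $$ k = 0" if "k < 0" for k using agree that assms(1) qphi_nth_neg by simp
  have "p $$ 0 = 1" using agree assms(1) qphi_nth_0 by simp
  then have "p \<noteq> 0" by auto
  have U: "U \<noteq> 0" "fls_subdegree U = 0"
    unfolding U_def using p_neg by (intro fls_subdegree_X_mult_plus_1 fls_subdegree_ge0I; simp)+
  have V: "V \<noteq> 0" "fls_subdegree V = 0"
    unfolding V_def using qphi_nth_neg by (intro fls_subdegree_X_mult_plus_1 fls_subdegree_ge0I; simp)+
  have F_step: "(F - 1) * U = fls_X^2 * p"
    unfolding F_def U_def using \<open>p \<noteq> 0\<close> U by (intro one_plus_div_step_eq) (auto simp: U_def)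
  have "(F - qphi) * (U * V) = (F - 1) * U * V - (qphi - 1) * V * U" by (simp add: algebra_simps)
  also have "\<dots> = fls_X^2 * p * V - fls_X^2 * qphi * U" by (simp only: F_step V_def qphi_fixed_point)
  also have "\<dots> = fls_X^2 * (p - qphi)" by (simp add: U_def V_def algebra_simps)
  finally have "\<forall>k<m + 2. ((F - qphi) * (U * V)) $$ k = 0"
    using agree by (simp add: fls_X_power_times_conv_shift)
  then have "\<forall>k<m + 2. (F - qphi) $$ k = 0" using U V by (intro fls_vanishes_below_mult_unit) auto
  then show ?thesis by (simp add: F_def)
qed

lemma qcf_ones_nth: "\<forall>k < max 1 (int n). qcf True (replicate (Suc n) 1) $$ k = qphi $$ k"
proof (induction n rule: nat_induct2)
  case 0
  show ?case using qphi_nth_neg qphi_nth_0 by (auto simp: zless_add1_eq)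
next
  case 1
  show ?case using qphi_nth_neg qphi_nth_0 by (auto simp: zless_add1_eq)
next
  case (step n)
  have "replicate (Suc (n + 2)) 1 = 1 # 1 # replicate (Suc n) (1::nat)" by simp
  then show ?case
    using qphi_contraction[OF _ step.IH] by (auto simp: qcf_True_Cons_1_1)
qed

lemma cf_rem_fixed_point:
  fixes x :: real
  assumes "1 / (x - \<lfloor>x\<rfloor>) = x"
  shows "cf_rem x n = x"
proof (induction n)
  case (Suc n)
  then show ?case using assms by simp
qed simp

lemma convergent_fixed_point:
  fixes x :: real
  assumes "1 / (x - \<lfloor>x\<rfloor>) = x"
  shows "convergent x n = cf_value (replicate n (nat \<lfloor>x\<rfloor>))"
proof -
  have "cf_term x = (\<lambda>_. nat \<lfloor>x\<rfloor>)" by (simp add: fun_eq_iff cf_term_def cf_rem_fixed_point[OF assms])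
  then show ?thesis by (simp add: convergent_def map_replicate_const)
qed

lemma golden_ratio_cf:
  fixes \<phi> :: real
  defines "\<phi> \<equiv> (1 + sqrt 5) / 2"
  shows "\<lfloor>\<phi>\<rfloor> = 1" "1 / (\<phi> - \<lfloor>\<phi>\<rfloor>) = \<phi>"
proof -
  have "1 < sqrt (5::real)" "sqrt (5::real) < 3" by (simp_all add: real_less_lsqrt)
  then have "1 < \<phi>" "\<phi> < 2" by (simp_all add: \<phi>_def)
  then show floor: "\<lfloor>\<phi>\<rfloor> = 1" by (simp add: floor_eq_iff)
  have "\<phi> * (\<phi> - 1) = 1" by (simp add: \<phi>_def field_simps)
  then show "1 / (\<phi> - \<lfloor>\<phi>\<rfloor>) = \<phi>" using \<open>1 < \<phi>\<close> by (simp add: floor divide_eq_eq)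
qed

lemma qreal_coeff_golden_ratio: "qreal_coeff ((1 + sqrt 5) / 2) k = real_of_rat (qphi $$ int k)"
proof -
  have "qrat (convergent ((1 + sqrt 5) / 2) (Suc n)) $$ int k = qphi $$ int k"
    if "k < n" for n
  proof -
    have "convergent ((1 + sqrt 5) / 2) (Suc n) = cf_value (replicate (Suc n) 1)"
      using convergent_fixed_point[OF golden_ratio_cf(2)] golden_ratio_cf(1) by simp
    then show ?thesis using that qcf_ones_nth[of n] by (simp add: qrat_cf_value)
  qed
  then have "\<forall>\<^sub>F n in sequentially.
      real_of_rat (qrat (convergent ((1 + sqrt 5) / 2) (Suc n)) $$ int k)
      = real_of_rat (qphi $$ int k)"
    by (auto simp: eventually_sequentially intro: exI[of _ "Suc k"])
  then show ?thesis
    unfolding qreal_coeff_def by (intro limI tendsto_eventually)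
qed

theorem proposition4p1:
  fixes \<phi> :: real
  defines "\<phi> \<equiv> (1 + sqrt 5) / 2"
  shows "qreal_coeff \<phi> 0 = 1 \<and> qreal_coeff \<phi> 1 = 0 \<and>
         (\<forall>k\<ge>2. qreal_coeff \<phi> k = (-1) ^ k * real (gcat (k - 1)))"
  unfolding \<phi>_def qreal_coeff_golden_ratio
  using qphi_nth_0 qphi_nth_1 qphi_nth_ge_2 by (simp add: of_rat_mult of_rat_power)

end
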